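(* Let $v_\lambda(k)$ ($|k|<\Lambda$, $\lambda\in\{1,2\}$) be nonzero complex coefficients and $w\ge0$ an integrable function on $\mathbb{R}^3$, $\widehat w(k)=\int e^{ik\cdot x}w(x)\,dx$, such that for all complex families $f_\lambda(k)$ $$\sum_{|k|<\Lambda,\lambda}\frac{|f_\lambda(k)|^2}{|v_\lambda(k)|^2}\ \ge\ \sum_{|k|,|k'|<\Lambda,\ \lambda,\lambda'}\frac{1}{2V}\overline{f_\lambda(k)}\,f_{\lambda'}(k')\,\widehat w(k-k'),$$ and let $L(y)=\frac{1}{\sqrt{2V}}\sum_{|k|<\Lambda,\lambda}\sqrt{|k|}\,a_\lambda(k)\overline{v_\lambda(k)}e^{ik\cdot y}$. Then, with $c=\frac{1}{2V}\sum_{|k|<\Lambda,\lambda}|k|\,|v_\lambda(k)|^2$, both of the following hold as quadratic forms: $$H_f\ge -c\int w(y)\,dy+\frac14\int w(y)\big(L(y)+L^*(y)\big)^2dy,$$ $$H_f\ge -c\int w(y)\,dy-\frac14\int w(y)\big(L(y)-L^*(y)\big)^2dy.$$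
   Context: The radiation field lives in a box of side $L$, volume $V=L^3$; modes $k\in(2\pi/L)\mathbb{Z}^3$ with $|k|<\Lambda$, polarizations $\lambda\in\{1,2\}$. $\mathcal F$ is the photon Fock space with $[a_\lambda(k),a^*_{\lambda'}(k')]=\delta_{\lambda\lambda'}\delta(k,k')$, all other pairs commuting, and $H_f=\sum_{|k|<\Lambda}\sum_{\lambda}|k|\,a^*_\lambda(k)a_\lambda(k)$. *)

theory Defs
  imports "HOL-Analysis.Analysis"
begin

text \<open>A mode is a pair (k, polarization) with k in R^3 and polarization in {1,2}.\<close>
type_synonym mode = "(real^3) \<times> nat"
text \<open>Occupation-number configurations and Fock-space vectors in the occupation-number basis.\<close>
type_synonym config = "mode \<Rightarrow> nat"
type_synonym fock = "config \<Rightarrow> complex"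

definition modes :: "real \<Rightarrow> real \<Rightarrow> mode set" where
  "modes L \<Lambda> = {(k, l). (\<forall>i. \<exists>z::int. k $ i = 2 * pi / L * of_int z) \<and> norm k < \<Lambda> \<and> l \<in> {1, 2}}"

text \<open>Finite-particle vectors of the photon Fock space over the modes (form core).\<close>
definition fock_dom :: "real \<Rightarrow> real \<Rightarrow> fock set" where
  "fock_dom L \<Lambda> = {\<psi>. finite {n. \<psi> n \<noteq> 0} \<and>
      (\<forall>n. \<psi> n \<noteq> 0 \<longrightarrow> (\<forall>m. m \<notin> modes L \<Lambda> \<longrightarrow> n m = 0))}"

definition ann :: "mode \<Rightarrow> fock \<Rightarrow> fock" where
  "ann m \<psi> = (\<lambda>n. complex_of_real (sqrt (real (n m + 1))) * \<psi> (n(m := n m + 1)))"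

definition cre :: "mode \<Rightarrow> fock \<Rightarrow> fock" where
  "cre m \<psi> = (\<lambda>n. if n m = 0 then 0
                   else complex_of_real (sqrt (real (n m))) * \<psi> (n(m := n m - 1)))"

definition fock_inner :: "fock \<Rightarrow> fock \<Rightarrow> complex" where
  "fock_inner \<phi> \<psi> = infsum (\<lambda>n. cnj (\<phi> n) * \<psi> n) UNIV"

definition Hf :: "real \<Rightarrow> real \<Rightarrow> fock \<Rightarrow> fock" where
  "Hf L \<Lambda> \<psi> = (\<lambda>n. \<Sum>m\<in>modes L \<Lambda>. complex_of_real (norm (fst m)) * cre m (ann m \<psi>) n)"

text \<open>L(y) and its adjoint L^*(y); volume V = L^3.\<close>
definition Lop :: "real \<Rightarrow> real \<Rightarrow> (mode \<Rightarrow> complex) \<Rightarrow> real^3 \<Rightarrow> fock \<Rightarrow> fock" where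
  "Lop L \<Lambda> v y \<psi> = (\<lambda>n. complex_of_real (1 / sqrt (2 * L^3)) *
      (\<Sum>m\<in>modes L \<Lambda>. complex_of_real (sqrt (norm (fst m))) * cnj (v m) * cis (fst m \<bullet> y) * ann m \<psi> n))"

definition Lstar :: "real \<Rightarrow> real \<Rightarrow> (mode \<Rightarrow> complex) \<Rightarrow> real^3 \<Rightarrow> fock \<Rightarrow> fock" where
  "Lstar L \<Lambda> v y \<psi> = (\<lambda>n. complex_of_real (1 / sqrt (2 * L^3)) *
      (\<Sum>m\<in>modes L \<Lambda>. complex_of_real (sqrt (norm (fst m))) * v m * cis (- (fst m \<bullet> y)) * cre m \<psi> n))"

definition phi_plus :: "real \<Rightarrow> real \<Rightarrow> (mode \<Rightarrow> complex) \<Rightarrow> real^3 \<Rightarrow> fock \<Rightarrow> fock" where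
  "phi_plus L \<Lambda> v y \<psi> = (\<lambda>n. Lop L \<Lambda> v y \<psi> n + Lstar L \<Lambda> v y \<psi> n)"

definition phi_minus :: "real \<Rightarrow> real \<Rightarrow> (mode \<Rightarrow> complex) \<Rightarrow> real^3 \<Rightarrow> fock \<Rightarrow> fock" where
  "phi_minus L \<Lambda> v y \<psi> = (\<lambda>n. Lop L \<Lambda> v y \<psi> n - Lstar L \<Lambda> v y \<psi> n)"

definition fourier :: "(real^3 \<Rightarrow> real) \<Rightarrow> real^3 \<Rightarrow> complex" where
  "fourier w k = (LINT x|lborel. cis (k \<bullet> x) * complex_of_real (w x))"

end

(*
  The commutation relations give [L(y), Lstar(y)] = c, hence |Lstar(y) psi|^2 = |L(y) psi|^2 + c |psi|^2.
  Since Lstar(y) is the adjoint of L(y), <psi, (L + Lstar)^2 psi> = |(L + Lstar) psi|^2 and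
  -<psi, (L - Lstar)^2 psi> = |(L - Lstar) psi|^2, and both are at most
  2 |L psi|^2 + 2 |Lstar psi|^2 = 4 |L(y) psi|^2 + 2 c |psi|^2.  It remains to show
  int w(y) |L(y) psi|^2 dy <= <psi, H_f psi>.  In the occupation-number basis each coefficient
  (L(y) psi)(n) is a trigonometric polynomial in y, so integrating its square against w produces the
  quadratic form of the hypothesis at f(k) = sqrt |k| v(k) conj ((a(k) psi)(n)).  The hypothesis bounds
  it by sum_k |k| |(a(k) psi)(n)|^2, and summing over n gives sum_k |k| |a(k) psi|^2 = <psi, H_f psi>.
*)

theory Submission
  imports Defs
begin

section \<open>Finitely supported Fock vectors\<close>

definition fock_support :: "fock \<Rightarrow> config set" where
  "fock_support \<psi> = {n. \<psi> n \<noteq> 0}"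

definition fock_norm2 :: "fock \<Rightarrow> real" where
  "fock_norm2 \<psi> = Re (fock_inner \<psi> \<psi>)"

lemma fock_inner_eq_sum:
  assumes "finite F" and "\<And>n. n \<notin> F \<Longrightarrow> a n = 0 \<or> b n = 0"
  shows "fock_inner a b = (\<Sum>n\<in>F. cnj (a n) * b n)"
proof -
  have "fock_inner a b = infsum (\<lambda>n. cnj (a n) * b n) F"
    unfolding fock_inner_def by (rule infsum_cong_neutral) (use assms(2) in auto)
  also have "\<dots> = (\<Sum>n\<in>F. cnj (a n) * b n)"
    using assms(1) by (rule infsum_finite)
  finally show ?thesis .
qed

lemma fock_inner_eq_sum_support:
  "finite (fock_support a) \<Longrightarrow> fock_inner a b = (\<Sum>n\<in>fock_support a. cnj (a n) * b n)"
  by (rule fock_inner_eq_sum) (auto simp: fock_support_def)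

lemma fock_inner_commute:
  assumes "finite (fock_support a)"
  shows "fock_inner b a = cnj (fock_inner a b)"
proof -
  have "fock_inner b a = (\<Sum>n\<in>fock_support a. cnj (b n) * a n)"
    by (rule fock_inner_eq_sum) (use assms in \<open>auto simp: fock_support_def\<close>)
  then show ?thesis
    using assms by (simp add: fock_inner_eq_sum_support mult.commute)
qed

lemma fock_inner_sum_right:
  assumes "finite (fock_support a)"
  shows "fock_inner a (\<lambda>n. \<Sum>m\<in>M. c m * T m n) = (\<Sum>m\<in>M. c m * fock_inner a (T m))"
  using assms
  by (simp add: fock_inner_eq_sum_support sum_distrib_left mult.left_commute
      sum.swap[of _ "fock_support a"])

lemma fock_inner_sum_left:
  assumes "finite (fock_support b)"
  shows "fock_inner (\<lambda>n. \<Sum>m\<in>M. c m * T m n) b = (\<Sum>m\<in>M. cnj (c m) * fock_inner (T m) b)"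
proof -
  have expand: "fock_inner x b = (\<Sum>n\<in>fock_support b. cnj (x n) * b n)" for x
    by (rule fock_inner_eq_sum) (use assms in \<open>auto simp: fock_support_def\<close>)
  show ?thesis
    unfolding expand by (simp add: sum_distrib_left sum_distrib_right mult.assoc
        sum.swap[of _ "fock_support b"])
qed

lemma fock_inner_scale_right:
  "finite (fock_support a) \<Longrightarrow> fock_inner a (\<lambda>n. c * b n) = c * fock_inner a b"
  by (simp add: fock_inner_eq_sum_support sum_distrib_left mult.left_commute)

lemma fock_inner_add_right:
  "finite (fock_support a) \<Longrightarrow> fock_inner a (\<lambda>n. b n + c n) = fock_inner a b + fock_inner a c"
  by (simp add: fock_inner_eq_sum_support distrib_left sum.distrib)

lemma fock_inner_diff_right:
  "finite (fock_support a) \<Longrightarrow> fock_inner a (\<lambda>n. b n - c n) = fock_inner a b - fock_inner a c"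
  by (simp add: fock_inner_eq_sum_support right_diff_distrib sum_subtractf)

lemma fock_inner_add_left:
  assumes "finite (fock_support c)"
  shows "fock_inner (\<lambda>n. a n + b n) c = fock_inner a c + fock_inner b c"
  using fock_inner_add_right[OF assms, of a b] by (simp add: fock_inner_commute[OF assms])

lemma fock_inner_diff_left:
  assumes "finite (fock_support c)"
  shows "fock_inner (\<lambda>n. a n - b n) c = fock_inner a c - fock_inner b c"
  using fock_inner_diff_right[OF assms, of a b] by (simp add: fock_inner_commute[OF assms])

lemma finite_support_add:
  "finite (fock_support a) \<Longrightarrow> finite (fock_support b) \<Longrightarrow> finite (fock_support (\<lambda>n. a n + b n))"
  by (rule finite_subset[of _ "fock_support a \<union> fock_support b"]) (auto simp: fock_support_def)

lemma finite_support_diff: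
  "finite (fock_support a) \<Longrightarrow> finite (fock_support b) \<Longrightarrow> finite (fock_support (\<lambda>n. a n - b n))"
  by (rule finite_subset[of _ "fock_support a \<union> fock_support b"]) (auto simp: fock_support_def)

lemma finite_support_sum:
  assumes "finite M" and "\<And>m. m \<in> M \<Longrightarrow> finite (fock_support (T m))"
  shows "finite (fock_support (\<lambda>n. \<Sum>m\<in>M. c m * T m n))"
proof (rule finite_subset)
  show "fock_support (\<lambda>n. \<Sum>m\<in>M. c m * T m n) \<subseteq> (\<Union>m\<in>M. fock_support (T m))"
    by (auto simp: fock_support_def intro: sum.neutral)
  show "finite (\<Union>m\<in>M. fock_support (T m))"
    using assms by blast
qed

lemma fock_norm2_eq_sum:
  assumes "finite F" and "\<And>n. n \<notin> F \<Longrightarrow> x n = 0"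
  shows "fock_norm2 x = (\<Sum>n\<in>F. (cmod (x n))\<^sup>2)"
proof -
  have "cnj z * z = complex_of_real ((cmod z)\<^sup>2)" for z
    by (metis complex_norm_square mult.commute of_real_power)
  then show ?thesis
    unfolding fock_norm2_def by (simp add: fock_inner_eq_sum[OF assms(1)] assms(2))
qed

lemma fock_norm2_nonneg: "finite (fock_support x) \<Longrightarrow> fock_norm2 x \<ge> 0"
  by (subst fock_norm2_eq_sum[of "fock_support x"]) (auto simp: fock_support_def intro: sum_nonneg)

lemma norm_add_squared_le:
  fixes a b :: "'a::real_normed_vector"
  shows "(norm (a + b))\<^sup>2 \<le> 2 * (norm a)\<^sup>2 + 2 * (norm b)\<^sup>2"
proof -
  have "(norm (a + b))\<^sup>2 \<le> (norm a + norm b)\<^sup>2"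
    by (simp add: norm_triangle_ineq power_mono)
  also have "\<dots> \<le> 2 * (norm a)\<^sup>2 + 2 * (norm b)\<^sup>2"
    using zero_le_power2[of "norm a - norm b"] unfolding power2_sum power2_diff by linarith
  finally show ?thesis .
qed

lemma fock_norm2_add_le:
  assumes "finite (fock_support a)" and "finite (fock_support b)"
  shows "fock_norm2 (\<lambda>n. a n + b n) \<le> 2 * fock_norm2 a + 2 * fock_norm2 b"
proof -
  let ?F = "fock_support a \<union> fock_support b"
  have F: "finite ?F" "\<And>n. n \<notin> ?F \<Longrightarrow> a n = 0" "\<And>n. n \<notin> ?F \<Longrightarrow> b n = 0"
    using assms by (auto simp: fock_support_def)
  have "fock_norm2 (\<lambda>n. a n + b n) = (\<Sum>n\<in>?F. (cmod (a n + b n))\<^sup>2)"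
    using F by (intro fock_norm2_eq_sum) auto
  also have "\<dots> \<le> (\<Sum>n\<in>?F. 2 * (cmod (a n))\<^sup>2 + 2 * (cmod (b n))\<^sup>2)"
    by (intro sum_mono norm_add_squared_le)
  also have "\<dots> = 2 * fock_norm2 a + 2 * fock_norm2 b"
    using fock_norm2_eq_sum[OF F(1,2)] fock_norm2_eq_sum[OF F(1,3)]
    by (simp add: sum.distrib sum_distrib_left)
  finally show ?thesis .
qed

lemma fock_norm2_diff_le:
  assumes "finite (fock_support a)" and "finite (fock_support b)"
  shows "fock_norm2 (\<lambda>n. a n - b n) \<le> 2 * fock_norm2 a + 2 * fock_norm2 b"
proof -
  have "finite (fock_support (\<lambda>n. - b n))" and "fock_norm2 (\<lambda>n. - b n) = fock_norm2 b"
    using assms(2) by (auto simp: fock_support_def fock_norm2_def fock_inner_def)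
  then show ?thesis
    using fock_norm2_add_le[OF assms(1), of "\<lambda>n. - b n"] by simp
qed

section \<open>Creation and annihilation operators\<close>

lemma inj_fun_upd_Suc: "inj (\<lambda>n::config. n(m := Suc (n m)))"
proof (rule injI)
  fix x y :: config
  assume eq: "x(m := Suc (x m)) = y(m := Suc (y m))"
  show "x = y"
  proof
    fix z
    show "x z = y z" using fun_cong[OF eq, of z] by (cases "z = m") auto
  qed
qed

lemma inj_on_fun_upd_pred: "inj_on (\<lambda>n::config. n(m := n m - 1)) {n. n m > 0}"
proof (rule inj_onI)
  fix x y :: config
  assume eq: "x(m := x m - 1) = y(m := y m - 1)" and "x \<in> {n. n m > 0}" "y \<in> {n. n m > 0}"
  show "x = y"
  proof
    fix z
    show "x z = y z" using fun_cong[OF eq, of z] \<open>x \<in> _\<close> \<open>y \<in> _\<close> by (cases "z = m") auto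
  qed
qed

lemma finite_support_ann: "finite (fock_support \<psi>) \<Longrightarrow> finite (fock_support (ann m \<psi>))"
  by (rule finite_subset[OF _ finite_vimageI[OF _ inj_fun_upd_Suc]])
    (auto simp: fock_support_def ann_def)

lemma finite_support_cre: "finite (fock_support \<psi>) \<Longrightarrow> finite (fock_support (cre m \<psi>))"
  by (rule finite_subset[OF _ finite_vimage_IntI[OF _ inj_on_fun_upd_pred]])
    (auto simp: fock_support_def cre_def split: if_splits)

lemma ann_sum: "ann m (\<lambda>p. \<Sum>i\<in>I. c i * T i p) n = (\<Sum>i\<in>I. c i * ann m (T i) n)"
  by (simp add: ann_def sum_distrib_left mult_ac)

lemma cre_sum: "cre m (\<lambda>p. \<Sum>i\<in>I. c i * T i p) n = (\<Sum>i\<in>I. c i * cre m (T i) n)"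
  by (cases "n m = 0") (simp_all add: cre_def sum_distrib_left mult_ac)

lemma fock_inner_ann:
  assumes "finite (fock_support u)"
  shows "fock_inner u (ann m \<psi>) = fock_inner (cre m u) \<psi>"
proof -
  define raise where "raise n = n(m := Suc (n m))" for n :: config
  have "fock_inner (cre m u) \<psi> = (\<Sum>n\<in>raise ` fock_support u. cnj (cre m u n) * \<psi> n)"
  proof (rule fock_inner_eq_sum)
    show "finite (raise ` fock_support u)"
      using assms by simp
    show "cre m u n = 0 \<or> \<psi> n = 0" if "n \<notin> raise ` fock_support u" for n
    proof (cases "n m = 0")
      case False
      then have "raise (n(m := n m - 1)) = n"
        by (simp add: raise_def)
      then have "n(m := n m - 1) \<notin> fock_support u"
        using that by (metis image_eqI)
      then show ?thesis
        by (simp add: cre_def fock_support_def)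
    qed (simp add: cre_def)
  qed
  also have "\<dots> = (\<Sum>n\<in>fock_support u. cnj (cre m u (raise n)) * \<psi> (raise n))"
    using inj_fun_upd_Suc[of m] by (simp add: sum.reindex inj_on_subset raise_def)
  also have "\<dots> = (\<Sum>n\<in>fock_support u. cnj (u n) * ann m \<psi> n)"
    by (rule sum.cong) (auto simp: raise_def cre_def ann_def)
  also have "\<dots> = fock_inner u (ann m \<psi>)"
    using assms by (simp add: fock_inner_eq_sum_support)
  finally show ?thesis by simp
qed

lemma fock_inner_cre:
  assumes "finite (fock_support u)" and "finite (fock_support \<psi>)"
  shows "fock_inner u (cre m \<psi>) = fock_inner (ann m u) \<psi>"
proof -
  have "fock_inner u (cre m \<psi>) = cnj (fock_inner (cre m \<psi>) u)"
    using assms(2) by (intro fock_inner_commute finite_support_cre)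
  also have "\<dots> = cnj (fock_inner \<psi> (ann m u))"
    using fock_inner_ann[OF assms(2)] by simp
  also have "\<dots> = fock_inner (ann m u) \<psi>"
    using fock_inner_commute[OF assms(2)] by simp
  finally show ?thesis .
qed

lemma ann_cre_commute:
  "ann m (cre m' \<psi>) n = cre m' (ann m \<psi>) n + (if m = m' then \<psi> n else 0)"
proof (cases "m = m'")
  case True
  have sq: "complex_of_real (sqrt x) * complex_of_real (sqrt x) = complex_of_real x" if "x \<ge> 0" for x
    using that by (simp flip: of_real_mult)
  show ?thesis
  proof (cases "n m = 0")
    case False
    then have "n(m := n m - 1 + 1) = n"
      by simp
    with False have "ann m (cre m \<psi>) n = of_nat (n m + 1) * \<psi> n"
      and "cre m (ann m \<psi>) n = of_nat (n m) * \<psi> n"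
      by (simp_all add: ann_def cre_def mult.assoc[symmetric] sq)
    with True show ?thesis
      by (simp add: algebra_simps)
  qed (use True in \<open>simp add: ann_def cre_def sq\<close>)
next
  case False
  then have "n(m := Suc (n m), m' := n m' - 1) = n(m' := n m' - 1, m := Suc (n m))"
    by (simp add: fun_upd_twist)
  with False show ?thesis
    by (simp add: ann_def cre_def)
qed

section \<open>Smeared field operators\<close>

definition ann_field :: "mode set \<Rightarrow> (mode \<Rightarrow> complex) \<Rightarrow> fock \<Rightarrow> fock" where
  "ann_field M f \<psi> = (\<lambda>n. \<Sum>m\<in>M. cnj (f m) * ann m \<psi> n)"

definition cre_field :: "mode set \<Rightarrow> (mode \<Rightarrow> complex) \<Rightarrow> fock \<Rightarrow> fock" where
  "cre_field M f \<psi> = (\<lambda>n. \<Sum>m\<in>M. f m * cre m \<psi> n)"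

lemma finite_support_ann_field:
  "finite M \<Longrightarrow> finite (fock_support \<psi>) \<Longrightarrow> finite (fock_support (ann_field M f \<psi>))"
  unfolding ann_field_def by (intro finite_support_sum finite_support_ann)

lemma finite_support_cre_field:
  "finite M \<Longrightarrow> finite (fock_support \<psi>) \<Longrightarrow> finite (fock_support (cre_field M f \<psi>))"
  unfolding cre_field_def by (intro finite_support_sum finite_support_cre)

lemma fock_inner_ann_field:
  assumes "finite (fock_support u)" and "finite (fock_support \<psi>)"
  shows "fock_inner u (ann_field M f \<psi>) = fock_inner (cre_field M f u) \<psi>"
  using assms by (simp add: ann_field_def cre_field_def fock_inner_sum_right fock_inner_sum_left
      fock_inner_ann)

lemma fock_inner_cre_field:
  assumes "finite (fock_support u)" and "finite (fock_support \<psi>)"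
  shows "fock_inner u (cre_field M f \<psi>) = fock_inner (ann_field M f u) \<psi>"
  using assms by (simp add: ann_field_def cre_field_def fock_inner_sum_right fock_inner_sum_left
      fock_inner_cre)

lemma ann_field_cre_field_commute:
  assumes "finite M"
  shows "ann_field M f (cre_field M g \<psi>) n
    = cre_field M g (ann_field M f \<psi>) n + (\<Sum>m\<in>M. cnj (f m) * g m) * \<psi> n"
proof -
  have "ann_field M f (cre_field M g \<psi>) n
      = (\<Sum>m\<in>M. \<Sum>m'\<in>M. cnj (f m) * g m' * ann m (cre m' \<psi>) n)"
    by (simp add: ann_field_def cre_field_def ann_sum sum_distrib_left mult_ac)
  also have "\<dots> = (\<Sum>m\<in>M. \<Sum>m'\<in>M. cnj (f m) * g m' * cre m' (ann m \<psi>) n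
      + (if m = m' then cnj (f m) * g m * \<psi> n else 0))"
    by (intro sum.cong refl) (auto simp: ann_cre_commute distrib_left)
  also have "\<dots> = (\<Sum>m\<in>M. \<Sum>m'\<in>M. cnj (f m) * g m' * cre m' (ann m \<psi>) n)
      + (\<Sum>m\<in>M. cnj (f m) * g m) * \<psi> n"
    using assms by (simp add: sum.distrib sum_distrib_right)
  also have "(\<Sum>m\<in>M. \<Sum>m'\<in>M. cnj (f m) * g m' * cre m' (ann m \<psi>) n)
      = cre_field M g (ann_field M f \<psi>) n"
    by (subst sum.swap) (simp add: ann_field_def cre_field_def cre_sum sum_distrib_left mult_ac)
  finally show ?thesis .
qed

lemma fock_norm2_cre_field:
  assumes "finite M" and "finite (fock_support \<psi>)"
  shows "fock_norm2 (cre_field M f \<psi>)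
    = fock_norm2 (ann_field M f \<psi>) + (\<Sum>m\<in>M. (cmod (f m))\<^sup>2) * fock_norm2 \<psi>"
proof -
  let ?a = "ann_field M f" and ?c = "cre_field M f"
  have fin: "finite (fock_support (?a \<psi>))" "finite (fock_support (?c \<psi>))"
    using assms by (simp_all add: finite_support_ann_field finite_support_cre_field)
  have const: "(\<Sum>m\<in>M. cnj (f m) * f m) = complex_of_real (\<Sum>m\<in>M. (cmod (f m))\<^sup>2)"
    by (simp add: mult.commute flip: complex_norm_square)
  have "fock_inner (?c \<psi>) (?c \<psi>) = fock_inner \<psi> (?a (?c \<psi>))"
    using fock_inner_ann_field[OF assms(2) fin(2)] by simp
  also have "?a (?c \<psi>) = (\<lambda>n. ?c (?a \<psi>) n + (\<Sum>m\<in>M. cnj (f m) * f m) * \<psi> n)"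
    using ann_field_cre_field_commute[OF assms(1)] by blast
  also have "fock_inner \<psi> \<dots> = fock_inner \<psi> (?c (?a \<psi>)) + (\<Sum>m\<in>M. cnj (f m) * f m) * fock_inner \<psi> \<psi>"
    using assms(2) by (simp add: fock_inner_add_right fock_inner_scale_right)
  also have "fock_inner \<psi> (?c (?a \<psi>)) = fock_inner (?a \<psi>) (?a \<psi>)"
    using fock_inner_cre_field[OF assms(2) fin(1)] .
  finally show ?thesis
    unfolding fock_norm2_def const by simp
qed

lemma field_plus_square_le:
  fixes M f \<psi>
  defines "X \<equiv> \<lambda>n. ann_field M f \<psi> n + cre_field M f \<psi> n"
  assumes "finite M" and "finite (fock_support \<psi>)"
  shows "Re (fock_inner \<psi> (\<lambda>n. ann_field M f X n + cre_field M f X n))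
    \<le> 4 * fock_norm2 (ann_field M f \<psi>) + 2 * (\<Sum>m\<in>M. (cmod (f m))\<^sup>2) * fock_norm2 \<psi>"
proof -
  have fin: "finite (fock_support (ann_field M f \<psi>))" "finite (fock_support (cre_field M f \<psi>))"
    using assms by (simp_all add: finite_support_ann_field finite_support_cre_field)
  then have finX: "finite (fock_support X)"
    unfolding X_def by (rule finite_support_add)
  have "fock_inner \<psi> (\<lambda>n. ann_field M f X n + cre_field M f X n)
      = fock_inner (cre_field M f \<psi>) X + fock_inner (ann_field M f \<psi>) X"
    using assms finX by (simp add: fock_inner_add_right fock_inner_ann_field fock_inner_cre_field)
  also have "\<dots> = fock_inner X X"
    using fock_inner_add_left[OF finX] by (simp add: X_def add.commute)
  finally have "Re (fock_inner \<psi> (\<lambda>n. ann_field M f X n + cre_field M f X n)) = fock_norm2 X"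
    by (simp add: fock_norm2_def)
  also have "\<dots> \<le> 2 * fock_norm2 (ann_field M f \<psi>) + 2 * fock_norm2 (cre_field M f \<psi>)"
    unfolding X_def using fin by (rule fock_norm2_add_le)
  finally show ?thesis
    using assms by (simp add: fock_norm2_cre_field)
qed

lemma field_minus_square_le:
  fixes M f \<psi>
  defines "X \<equiv> \<lambda>n. ann_field M f \<psi> n - cre_field M f \<psi> n"
  assumes "finite M" and "finite (fock_support \<psi>)"
  shows "- Re (fock_inner \<psi> (\<lambda>n. ann_field M f X n - cre_field M f X n))
    \<le> 4 * fock_norm2 (ann_field M f \<psi>) + 2 * (\<Sum>m\<in>M. (cmod (f m))\<^sup>2) * fock_norm2 \<psi>"
proof -
  have fin: "finite (fock_support (ann_field M f \<psi>))" "finite (fock_support (cre_field M f \<psi>))"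
    using assms by (simp_all add: finite_support_ann_field finite_support_cre_field)
  then have finX: "finite (fock_support X)"
    unfolding X_def by (rule finite_support_diff)
  have "fock_inner \<psi> (\<lambda>n. ann_field M f X n - cre_field M f X n)
      = fock_inner (cre_field M f \<psi>) X - fock_inner (ann_field M f \<psi>) X"
    using assms finX by (simp add: fock_inner_diff_right fock_inner_ann_field fock_inner_cre_field)
  also have "\<dots> = - fock_inner X X"
    using fock_inner_diff_left[OF finX] by (simp add: X_def)
  finally have "- Re (fock_inner \<psi> (\<lambda>n. ann_field M f X n - cre_field M f X n)) = fock_norm2 X"
    by (simp add: fock_norm2_def)
  also have "\<dots> \<le> 2 * fock_norm2 (ann_field M f \<psi>) + 2 * fock_norm2 (cre_field M f \<psi>)"
    unfolding X_def using fin by (rule fock_norm2_diff_le)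
  finally show ?thesis
    using assms by (simp add: fock_norm2_cre_field)
qed

section \<open>The fields L(y) and their squares\<close>

lemma finite_modes:
  assumes "L > 0"
  shows "finite (modes L \<Lambda>)"
proof -
  define N where "N = \<lceil>\<Lambda> * L / (2 * pi)\<rceil>"
  define R where "R = (\<lambda>z::int. 2 * pi / L * of_int z) ` {-N..N}"
  have "k $ i \<in> R" if "(k, l) \<in> modes L \<Lambda>" for k l i
  proof -
    have "\<forall>i. \<exists>z::int. k $ i = 2 * pi / L * of_int z" and k: "norm k < \<Lambda>"
      using that by (auto simp: modes_def)
    then obtain z :: int where z: "k $ i = 2 * pi / L * of_int z"
      by blast
    then have "2 * pi / L * \<bar>of_int z\<bar> < \<Lambda>"
      using component_le_norm_cart[of k i] k assms by (simp add: abs_mult)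
    then have "\<bar>of_int z\<bar> < \<Lambda> * L / (2 * pi)"
      using assms by (simp add: field_simps)
    then have "\<bar>z\<bar> \<le> N"
      unfolding N_def by linarith
    then have "z \<in> {-N..N}"
      by auto
    then show ?thesis
      unfolding R_def z by (rule imageI)
  qed
  then have "modes L \<Lambda> \<subseteq> (vec_lambda ` PiE UNIV (\<lambda>_. R)) \<times> {1, 2}"
    by (auto simp: modes_def intro!: image_eqI[where x = "vec_nth _"])
  moreover have "finite (vec_lambda ` PiE (UNIV :: 3 set) (\<lambda>_. R) \<times> {1, 2 :: nat})"
    by (simp add: R_def finite_PiE)
  ultimately show ?thesis
    by (rule finite_subset)
qed

definition form_factor :: "real \<Rightarrow> (mode \<Rightarrow> complex) \<Rightarrow> real^3 \<Rightarrow> mode \<Rightarrow> complex" where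
  "form_factor L v y m =
    complex_of_real (sqrt (norm (fst m)) / sqrt (2 * L^3)) * v m * cis (- (fst m \<bullet> y))"

definition commutator_L_Lstar :: "real \<Rightarrow> real \<Rightarrow> (mode \<Rightarrow> complex) \<Rightarrow> real" where
  "commutator_L_Lstar L \<Lambda> v = (\<Sum>m\<in>modes L \<Lambda>. norm (fst m) * (cmod (v m))\<^sup>2) / (2 * L^3)"

lemma Lop_eq_ann_field: "Lop L \<Lambda> v y = ann_field (modes L \<Lambda>) (form_factor L v y)"
  by (simp add: fun_eq_iff Lop_def ann_field_def form_factor_def sum_distrib_left cis_cnj
      of_real_divide mult_ac)

lemma Lstar_eq_cre_field: "Lstar L \<Lambda> v y = cre_field (modes L \<Lambda>) (form_factor L v y)"
  by (simp add: fun_eq_iff Lstar_def cre_field_def form_factor_def sum_distrib_left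
      of_real_divide mult_ac)

lemma sum_norm_form_factor:
  assumes "L > 0"
  shows "(\<Sum>m\<in>modes L \<Lambda>. (cmod (form_factor L v y m))\<^sup>2) = commutator_L_Lstar L \<Lambda> v"
proof -
  have "(cmod (form_factor L v y m))\<^sup>2 = norm (fst m) * (cmod (v m))\<^sup>2 / (2 * L^3)" for m
    using assms by (simp add: form_factor_def norm_mult norm_divide power_mult_distrib power_divide)
  then show ?thesis
    by (simp add: commutator_L_Lstar_def sum_divide_distrib)
qed

lemma phi_plus_square_le:
  assumes "L > 0" and "finite (fock_support \<psi>)"
  shows "Re (fock_inner \<psi> (phi_plus L \<Lambda> v y (phi_plus L \<Lambda> v y \<psi>)))
    \<le> 4 * fock_norm2 (Lop L \<Lambda> v y \<psi>) + 2 * commutator_L_Lstar L \<Lambda> v * fock_norm2 \<psi>"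
  using field_plus_square_le[where f = "form_factor L v y", OF finite_modes[OF assms(1)] assms(2)]
  by (simp add: phi_plus_def Lop_eq_ann_field Lstar_eq_cre_field sum_norm_form_factor[OF assms(1)])

lemma phi_minus_square_le:
  assumes "L > 0" and "finite (fock_support \<psi>)"
  shows "- Re (fock_inner \<psi> (phi_minus L \<Lambda> v y (phi_minus L \<Lambda> v y \<psi>)))
    \<le> 4 * fock_norm2 (Lop L \<Lambda> v y \<psi>) + 2 * commutator_L_Lstar L \<Lambda> v * fock_norm2 \<psi>"
  using field_minus_square_le[where f = "form_factor L v y", OF finite_modes[OF assms(1)] assms(2)]
  by (simp add: phi_minus_def Lop_eq_ann_field Lstar_eq_cre_field sum_norm_form_factor[OF assms(1)])

section \<open>The field energy bound\<close>

lemma Re_fock_inner_Hf: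
  assumes "finite (fock_support \<psi>)"
  shows "Re (fock_inner \<psi> (Hf L \<Lambda> \<psi>)) = (\<Sum>m\<in>modes L \<Lambda>. norm (fst m) * fock_norm2 (ann m \<psi>))"
  using assms
  by (simp add: Hf_def fock_inner_sum_right fock_inner_cre finite_support_ann fock_norm2_def)

lemma has_bochner_integral_fourier:
  fixes w :: "real^3 \<Rightarrow> real"
  assumes "integrable lborel w"
  shows "has_bochner_integral lborel (\<lambda>y. cis (d \<bullet> y) * complex_of_real (w y)) (fourier w d)"
proof -
  have "integrable lborel (\<lambda>y. cis (d \<bullet> y) * complex_of_real (w y))"
  proof (rule Bochner_Integration.integrable_bound[OF integrable_of_real[where 'a = complex, OF assms]])
    have "(\<lambda>y::real^3. cis (d \<bullet> y)) \<in> borel_measurable borel"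
      by (intro borel_measurable_continuous_onI continuous_intros)
    moreover have "w \<in> borel_measurable lborel"
      using assms by (rule borel_measurable_integrable)
    ultimately show "(\<lambda>y. cis (d \<bullet> y) * complex_of_real (w y)) \<in> borel_measurable lborel"
      by measurable
  qed (simp add: norm_mult)
  then show ?thesis
    by (simp add: has_bochner_integral_iff fourier_def)
qed

lemma has_bochner_integral_weighted_trig_sum_sq:
  fixes w :: "real^3 \<Rightarrow> real" and b :: "'i \<Rightarrow> complex" and k :: "'i \<Rightarrow> real^3"
  assumes "integrable lborel w"
  shows "has_bochner_integral lborel (\<lambda>y. w y * (cmod (\<Sum>i\<in>I. b i * cis (k i \<bullet> y)))\<^sup>2)
    (Re (\<Sum>i\<in>I. \<Sum>j\<in>I. cnj (b i) * b j * fourier w (k j - k i)))"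
proof -
  have "w y * (cmod (\<Sum>i\<in>I. b i * cis (k i \<bullet> y)))\<^sup>2
      = Re (\<Sum>i\<in>I. \<Sum>j\<in>I. cnj (b i) * b j * (cis ((k j - k i) \<bullet> y) * complex_of_real (w y)))"
    for y
  proof -
    let ?S = "\<Sum>i\<in>I. b i * cis (k i \<bullet> y)"
    have "complex_of_real (w y * (cmod ?S)\<^sup>2) = complex_of_real (w y) * (cnj ?S * ?S)"
      by (simp only: of_real_mult complex_norm_square mult.commute)
    also have "cnj ?S * ?S
        = (\<Sum>i\<in>I. \<Sum>j\<in>I. cnj (b i) * b j * (cnj (cis (k i \<bullet> y)) * cis (k j \<bullet> y)))"
      by (simp only: cnj_sum complex_cnj_mult sum_product) (simp add: mult_ac)
    also have "\<dots> = (\<Sum>i\<in>I. \<Sum>j\<in>I. cnj (b i) * b j * cis ((k j - k i) \<bullet> y))"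
      by (simp add: inner_diff_left cis_cnj cis_mult)
    finally have "complex_of_real (w y * (cmod ?S)\<^sup>2)
        = (\<Sum>i\<in>I. \<Sum>j\<in>I. cnj (b i) * b j * (cis ((k j - k i) \<bullet> y) * complex_of_real (w y)))"
      by (simp add: sum_distrib_left mult_ac)
    then show ?thesis
      by (metis Re_complex_of_real)
  qed
  moreover have "has_bochner_integral lborel
      (\<lambda>y. Re (\<Sum>i\<in>I. \<Sum>j\<in>I. cnj (b i) * b j * (cis ((k j - k i) \<bullet> y) * complex_of_real (w y))))
      (Re (\<Sum>i\<in>I. \<Sum>j\<in>I. cnj (b i) * b j * fourier w (k j - k i)))"
    by (intro has_bochner_integral_Re has_bochner_integral_sum has_bochner_integral_mult_right
        has_bochner_integral_fourier assms)
  ultimately show ?thesis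
    by simp
qed

definition fourier_kernel_bounded ::
    "real \<Rightarrow> real \<Rightarrow> (mode \<Rightarrow> complex) \<Rightarrow> (real^3 \<Rightarrow> real) \<Rightarrow> bool" where
  "fourier_kernel_bounded L \<Lambda> v w \<longleftrightarrow>
    (\<forall>f :: mode \<Rightarrow> complex.
       Re (\<Sum>m\<in>modes L \<Lambda>. \<Sum>m'\<in>modes L \<Lambda>.
             cnj (f m) * f m' * fourier w (fst m - fst m') / complex_of_real (2 * L^3))
       \<le> (\<Sum>m\<in>modes L \<Lambda>. (cmod (f m))^2 / (cmod (v m))^2))"

lemma fourier_form_le_field_energy:
  fixes L :: real and v a :: "mode \<Rightarrow> complex"
  defines "b \<equiv> \<lambda>m. complex_of_real (sqrt (norm (fst m)) / sqrt (2 * L^3)) * cnj (v m) * a m"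
  assumes "L > 0" and "\<forall>m\<in>modes L \<Lambda>. v m \<noteq> 0"
    and "fourier_kernel_bounded L \<Lambda> v w"
  shows "Re (\<Sum>m\<in>modes L \<Lambda>. \<Sum>m'\<in>modes L \<Lambda>. cnj (b m) * b m' * fourier w (fst m' - fst m))
    \<le> (\<Sum>m\<in>modes L \<Lambda>. norm (fst m) * (cmod (a m))\<^sup>2)"
proof -
  let ?M = "modes L \<Lambda>"
  define f where "f m = complex_of_real (sqrt (norm (fst m))) * v m * cnj (a m)" for m
  have "cnj (b m') * b m = cnj (f m) * f m' / complex_of_real (2 * L^3)" for m m'
  proof -
    have "complex_of_real (sqrt (2 * L^3)) * complex_of_real (sqrt (2 * L^3)) = complex_of_real (2 * L^3)"
      using \<open>L > 0\<close> by (simp flip: of_real_mult)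
    then show ?thesis
      by (simp add: b_def f_def field_simps)
  qed
  \<comment> \<open>the hypothesis pairs \<open>fourier w (k - k')\<close> with \<open>cnj (f k) * f k'\<close>, hence the swap\<close>
  then have "(\<Sum>m\<in>?M. \<Sum>m'\<in>?M. cnj (b m) * b m' * fourier w (fst m' - fst m))
      = (\<Sum>m\<in>?M. \<Sum>m'\<in>?M. cnj (f m) * f m' * fourier w (fst m - fst m') / complex_of_real (2 * L^3))"
    by (subst sum.swap) simp
  also have "Re \<dots> \<le> (\<Sum>m\<in>?M. (cmod (f m))\<^sup>2 / (cmod (v m))\<^sup>2)"
    using assms(4) unfolding fourier_kernel_bounded_def by blast
  also have "\<dots> = (\<Sum>m\<in>?M. norm (fst m) * (cmod (a m))\<^sup>2)"
    using assms(3) by (intro sum.cong refl) (simp add: f_def norm_mult power_mult_distrib)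
  finally show ?thesis .
qed

lemma integral_weighted_norm_Lop_le:
  assumes "L > 0" and "finite (fock_support \<psi>)" and "integrable lborel w"
    and "\<forall>m\<in>modes L \<Lambda>. v m \<noteq> 0"
    and "fourier_kernel_bounded L \<Lambda> v w"
  shows "integrable lborel (\<lambda>y. w y * fock_norm2 (Lop L \<Lambda> v y \<psi>))"
    and "(LINT y|lborel. w y * fock_norm2 (Lop L \<Lambda> v y \<psi>)) \<le> Re (fock_inner \<psi> (Hf L \<Lambda> \<psi>))"
proof -
  let ?M = "modes L \<Lambda>"
  define S where "S = (\<Union>m\<in>?M. fock_support (ann m \<psi>))"
  have S: "finite S" "\<And>m n. m \<in> ?M \<Longrightarrow> n \<notin> S \<Longrightarrow> ann m \<psi> n = 0"
    using assms(1,2) finite_support_ann by (auto simp: S_def finite_modes fock_support_def)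
  define b where "b n m = complex_of_real (sqrt (norm (fst m)) / sqrt (2 * L^3)) * cnj (v m) * ann m \<psi> n"
    for n m
  have Lop: "Lop L \<Lambda> v y \<psi> n = (\<Sum>m\<in>?M. b n m * cis (fst m \<bullet> y))" for y n
    by (simp add: Lop_def b_def sum_distrib_left of_real_divide mult_ac)
  have "w y * fock_norm2 (Lop L \<Lambda> v y \<psi>) = (\<Sum>n\<in>S. w y * (cmod (\<Sum>m\<in>?M. b n m * cis (fst m \<bullet> y)))\<^sup>2)"
    for y
    using S by (simp add: fock_norm2_eq_sum[OF S(1)] Lop b_def sum_distrib_left)
  then have integral: "has_bochner_integral lborel (\<lambda>y. w y * fock_norm2 (Lop L \<Lambda> v y \<psi>))
      (\<Sum>n\<in>S. Re (\<Sum>m\<in>?M. \<Sum>m'\<in>?M. cnj (b n m) * b n m' * fourier w (fst m' - fst m)))"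
    using has_bochner_integral_sum[OF has_bochner_integral_weighted_trig_sum_sq[OF assms(3)]]
    by simp
  then show "integrable lborel (\<lambda>y. w y * fock_norm2 (Lop L \<Lambda> v y \<psi>))"
    by (rule integrable.intros)
  have "(LINT y|lborel. w y * fock_norm2 (Lop L \<Lambda> v y \<psi>))
      = (\<Sum>n\<in>S. Re (\<Sum>m\<in>?M. \<Sum>m'\<in>?M. cnj (b n m) * b n m' * fourier w (fst m' - fst m)))"
    using integral by (rule has_bochner_integral_integral_eq)
  also have "\<dots> \<le> (\<Sum>n\<in>S. \<Sum>m\<in>?M. norm (fst m) * (cmod (ann m \<psi> n))\<^sup>2)"
    unfolding b_def using assms(1,4,5) by (intro sum_mono fourier_form_le_field_energy)
  also have "\<dots> = (\<Sum>m\<in>?M. norm (fst m) * fock_norm2 (ann m \<psi>))"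
    using S by (simp add: sum.swap[of _ S] sum_distrib_left fock_norm2_eq_sum[OF S(1)])
  also have "\<dots> = Re (fock_inner \<psi> (Hf L \<Lambda> \<psi>))"
    using assms(2) by (rule Re_fock_inner_Hf[symmetric])
  finally show "(LINT y|lborel. w y * fock_norm2 (Lop L \<Lambda> v y \<psi>)) \<le> Re (fock_inner \<psi> (Hf L \<Lambda> \<psi>))" .
qed

lemma integral_le_field_energy:
  fixes w :: "real^3 \<Rightarrow> real"
  assumes "L > 0" and "finite (fock_support \<psi>)"
    and "\<forall>m\<in>modes L \<Lambda>. v m \<noteq> 0" and "\<forall>x. w x \<ge> 0" and "integrable lborel w"
    and "fourier_kernel_bounded L \<Lambda> v w"
    and "\<And>y. G y \<le> w y * (4 * fock_norm2 (Lop L \<Lambda> v y \<psi>)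
                          + 2 * commutator_L_Lstar L \<Lambda> v * fock_norm2 \<psi>)"
  shows "(LINT y|lborel. G y) \<le> 4 * (Re (fock_inner \<psi> (Hf L \<Lambda> \<psi>))
    + commutator_L_Lstar L \<Lambda> v * (LINT y|lborel. w y) * fock_norm2 \<psi>)"
proof -
  define c where "c = commutator_L_Lstar L \<Lambda> v"
  define N where "N = fock_norm2 \<psi>"
  let ?Lw = "\<lambda>y. w y * fock_norm2 (Lop L \<Lambda> v y \<psi>)"
  have Lw: "integrable lborel ?Lw" "integral\<^sup>L lborel ?Lw \<le> Re (fock_inner \<psi> (Hf L \<Lambda> \<psi>))"
    using integral_weighted_norm_Lop_le[OF assms(1,2,5,3,6)] by auto
  have nonneg: "0 \<le> c" "0 \<le> N" "0 \<le> (LINT y|lborel. w y)" "0 \<le> ?Lw y" for y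
    using assms(1,2,4) finite_support_ann_field[OF finite_modes[OF assms(1)] assms(2)]
    by (simp_all add: c_def commutator_L_Lstar_def N_def fock_norm2_nonneg Lop_eq_ann_field
        sum_nonneg)
  have "integrable lborel (\<lambda>y. 4 * ?Lw y + (2 * c * N) * w y)"
    using Lw(1) assms(5) by simp
  then have "(LINT y|lborel. G y) \<le> (LINT y|lborel. 4 * ?Lw y + (2 * c * N) * w y)"
    by (rule integral_mono') (use assms(4,7) nonneg in \<open>auto simp: c_def N_def algebra_simps\<close>)
  also have "\<dots> = 4 * integral\<^sup>L lborel ?Lw + 2 * c * N * (LINT y|lborel. w y)"
    using Lw(1) assms(5) by simp
  finally show ?thesis
    using Lw(2) mult_nonneg_nonneg[OF mult_nonneg_nonneg[OF nonneg(1,2)] nonneg(3)]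
    by (simp add: c_def N_def algebra_simps)
qed

theorem corollary1:
  fixes L :: real and \<Lambda> :: real and v :: "mode \<Rightarrow> complex" and w :: "real^3 \<Rightarrow> real"
  assumes "L > 0"
    and "\<forall>m\<in>modes L \<Lambda>. v m \<noteq> 0"
    and "\<forall>x. w x \<ge> 0"
    and "integrable lborel w"
    and "\<forall>f :: mode \<Rightarrow> complex.
           Re (\<Sum>m\<in>modes L \<Lambda>. \<Sum>m'\<in>modes L \<Lambda>.
                 cnj (f m) * f m' * fourier w (fst m - fst m') / complex_of_real (2 * L^3))
           \<le> (\<Sum>m\<in>modes L \<Lambda>. (cmod (f m))^2 / (cmod (v m))^2)"
  shows "\<forall>\<psi>\<in>fock_dom L \<Lambda>.
           Re (fock_inner \<psi> (Hf L \<Lambda> \<psi>)) \<ge>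
             - ((\<Sum>m\<in>modes L \<Lambda>. norm (fst m) * (cmod (v m))^2) / (2 * L^3))
               * (LINT y|lborel. w y) * Re (fock_inner \<psi> \<psi>)
             + 1/4 * (LINT y|lborel. w y * Re (fock_inner \<psi> (phi_plus L \<Lambda> v y (phi_plus L \<Lambda> v y \<psi>))))
         \<and> Re (fock_inner \<psi> (Hf L \<Lambda> \<psi>)) \<ge>
             - ((\<Sum>m\<in>modes L \<Lambda>. norm (fst m) * (cmod (v m))^2) / (2 * L^3))
               * (LINT y|lborel. w y) * Re (fock_inner \<psi> \<psi>)
             - 1/4 * (LINT y|lborel. w y * Re (fock_inner \<psi> (phi_minus L \<Lambda> v y (phi_minus L \<Lambda> v y \<psi>))))"
proof -
  have kernel: "fourier_kernel_bounded L \<Lambda> v w"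
    using assms(5) unfolding fourier_kernel_bounded_def .
  let ?bound = "\<lambda>\<psi>. 4 * (Re (fock_inner \<psi> (Hf L \<Lambda> \<psi>))
    + commutator_L_Lstar L \<Lambda> v * (LINT y|lborel. w y) * fock_norm2 \<psi>)"
  have plus: "(LINT y|lborel. w y * Re (fock_inner \<psi> (phi_plus L \<Lambda> v y (phi_plus L \<Lambda> v y \<psi>))))
      \<le> ?bound \<psi>" if \<psi>: "finite (fock_support \<psi>)" for \<psi>
    by (rule integral_le_field_energy[OF assms(1) \<psi> assms(2-4) kernel])
      (use mult_left_mono[OF phi_plus_square_le[OF assms(1) \<psi>]] assms(3) in simp)
  have minus: "(LINT y|lborel. - (w y * Re (fock_inner \<psi> (phi_minus L \<Lambda> v y (phi_minus L \<Lambda> v y \<psi>)))))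
      \<le> ?bound \<psi>" if \<psi>: "finite (fock_support \<psi>)" for \<psi>
    by (rule integral_le_field_energy[OF assms(1) \<psi> assms(2-4) kernel])
      (use mult_left_mono[OF phi_minus_square_le[OF assms(1) \<psi>]] assms(3) in simp)
  from plus minus show ?thesis
    unfolding commutator_L_Lstar_def[symmetric] fock_norm2_def[symmetric]
    by (fastforce simp: fock_dom_def fock_support_def)
qed

end
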